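(* Let $\mu$ be a distribution over $\{0,1\}^V$ and $\theta\in(0,1)$. For every vertex $i\in V$ and every distribution $\nu$ on $\Omega(\pi)$ such that the function $\sigma\mapsto\nu(\sigma)/\pi(\sigma)$ is increasing on $\Omega(\pi)$, we have $\nu P^i_{\pi\text{-GD}}\preceq_{\mathrm{sd}}\nu P^i_{\mathrm{s\text{-}GD}}$; that is, $P^i_{\pi\text{-GD}}\preceq_{\mathrm{mc}}P^i_{\mathrm{s\text{-}GD}}$.
   Context: Tilted $(\theta*\mu)(\sigma)\propto\mu(\sigma)\theta^{\|\sigma\|_1}$. $\mathsf{lift}:\{0,1\}^V\to\{0,1,\star\}^V$ random: independently per coordinate $0\mapsto0$, $1\mapsto\star$ w.p. $1-\theta$, $1\mapsto1$ w.p. $\theta$; $\mathsf{contr}$: $0\mapsto0$, $1,\star\mapsto1$. $\pi$: law of $\mathsf{lift}(X)$, $X\sim\mu$, support $\Omega(\pi)$. $P^i_{\pi\text{-GD}}$: resample $X_i$ from $\pi$ conditioned on $X_{V\setminus\{i\}}$. $P^i_{\mathrm{s\text{-}GD}}$: if $X_i=\star$ keep it; otherwise resample $X_i\in\{0,1\}$ from $(\theta*\mu)_i^{\sigma_{V\setminus\{i\}}}$ with $\sigma=\mathsf{contr}(X)$. Order $0<1<\star$, coordinatewise partial order on $\{0,1,\star\}^V$; $f$ increasing means $X\preceq Y\Rightarrow f(X)\le f(Y)$; $\nu\preceq_{\mathrm{sd}}\nu'$ iff $\mathbb E_\nu f\le\mathbb E_{\nu'}f$ for every increasing $f\ge0$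 (equivalently, a monotone coupling exists). $P\preceq_{\mathrm{mc}}Q$ means $\nu P\preceq_{\mathrm{sd}}\nu Q$ for all $\nu$ with $\nu/\pi$ increasing. *)

theory Defs
  imports Complex_Main
begin

text \<open>Vertex set V is a finite type 'v. Spins of the lifted chain: 0, 1, star.\<close>

datatype spin = Zero | One | Star

lemma UNIV_spin: "(UNIV :: spin set) = {Zero, One, Star}"
  using spin.exhaust by auto

instance spin :: finite
  by standard (simp add: UNIV_spin)

fun spin_rank :: "spin \<Rightarrow> nat" where
  "spin_rank Zero = 0" | "spin_rank One = 1" | "spin_rank Star = 2"

definition cfg_le :: "('v \<Rightarrow> spin) \<Rightarrow> ('v \<Rightarrow> spin) \<Rightarrow> bool" where
  "cfg_le X Y \<longleftrightarrow> (\<forall>i. spin_rank (X i) \<le> spin_rank (Y i))"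

definition increasing :: "(('v \<Rightarrow> spin) \<Rightarrow> real) \<Rightarrow> bool" where
  "increasing f \<longleftrightarrow> (\<forall>X Y. cfg_le X Y \<longrightarrow> f X \<le> f Y)"

definition is_distr :: "('a::finite \<Rightarrow> real) \<Rightarrow> bool" where
  "is_distr p \<longleftrightarrow> (\<forall>x. 0 \<le> p x) \<and> (\<Sum>x\<in>UNIV. p x) = 1"

definition contr :: "('v \<Rightarrow> spin) \<Rightarrow> ('v \<Rightarrow> bool)" where
  "contr X = (\<lambda>i. X i \<noteq> Zero)"

text \<open>Transition probability of the random lift map, coordinatewise and independent.\<close>
fun lift1 :: "real \<Rightarrow> bool \<Rightarrow> spin \<Rightarrow> real" where
  "lift1 \<theta> False Zero = 1"
| "lift1 \<theta> False One = 0"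
| "lift1 \<theta> False Star = 0"
| "lift1 \<theta> True Zero = 0"
| "lift1 \<theta> True One = \<theta>"
| "lift1 \<theta> True Star = 1 - \<theta>"

definition lift_prob :: "real \<Rightarrow> ('v::finite \<Rightarrow> bool) \<Rightarrow> ('v \<Rightarrow> spin) \<Rightarrow> real" where
  "lift_prob \<theta> \<sigma> X = (\<Prod>i\<in>UNIV. lift1 \<theta> (\<sigma> i) (X i))"

definition piL :: "(('v::finite \<Rightarrow> bool) \<Rightarrow> real) \<Rightarrow> real \<Rightarrow> ('v \<Rightarrow> spin) \<Rightarrow> real" where
  "piL \<mu> \<theta> X = (\<Sum>\<sigma>\<in>UNIV. \<mu> \<sigma> * lift_prob \<theta> \<sigma> X)"

definition Omega :: "(('v::finite \<Rightarrow> spin) \<Rightarrow> real) \<Rightarrow> ('v \<Rightarrow> spin) set" where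
  "Omega p = {X. p X > 0}"

definition tilt :: "real \<Rightarrow> (('v::finite \<Rightarrow> bool) \<Rightarrow> real) \<Rightarrow> ('v \<Rightarrow> bool) \<Rightarrow> real" where
  "tilt \<theta> \<mu> \<sigma> = \<mu> \<sigma> * \<theta> ^ card {i. \<sigma> i} /
      (\<Sum>\<tau>\<in>UNIV. \<mu> \<tau> * \<theta> ^ card {i. \<tau> i})"

definition cond_marg :: "(('v \<Rightarrow> 'a::finite) \<Rightarrow> real) \<Rightarrow> 'v \<Rightarrow> ('v \<Rightarrow> 'a) \<Rightarrow> 'a \<Rightarrow> real" where
  "cond_marg p i \<sigma> b = p (\<sigma>(i := b)) / (\<Sum>c\<in>UNIV. p (\<sigma>(i := c)))"

definition P_piGD :: "(('v::finite \<Rightarrow> bool) \<Rightarrow> real) \<Rightarrow> real \<Rightarrow> 'v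
    \<Rightarrow> ('v \<Rightarrow> spin) \<Rightarrow> ('v \<Rightarrow> spin) \<Rightarrow> real" where
  "P_piGD \<mu> \<theta> i X Y =
     (if (\<forall>j. j \<noteq> i \<longrightarrow> Y j = X j) then cond_marg (piL \<mu> \<theta>) i X (Y i) else 0)"

definition P_sGD :: "(('v::finite \<Rightarrow> bool) \<Rightarrow> real) \<Rightarrow> real \<Rightarrow> 'v
    \<Rightarrow> ('v \<Rightarrow> spin) \<Rightarrow> ('v \<Rightarrow> spin) \<Rightarrow> real" where
  "P_sGD \<mu> \<theta> i X Y =
     (if X i = Star then (if Y = X then 1 else 0)
      else if (\<forall>j. j \<noteq> i \<longrightarrow> Y j = X j) \<and> Y i \<noteq> Star
        then cond_marg (tilt \<theta> \<mu>) i (contr X) (Y i = One)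
      else 0)"

definition kapply :: "('a::finite \<Rightarrow> real) \<Rightarrow> ('a \<Rightarrow> 'a \<Rightarrow> real) \<Rightarrow> 'a \<Rightarrow> real" where
  "kapply \<nu> P Y = (\<Sum>X\<in>UNIV. \<nu> X * P X Y)"

definition sd_le :: "(('v::finite \<Rightarrow> spin) \<Rightarrow> real) \<Rightarrow> (('v \<Rightarrow> spin) \<Rightarrow> real) \<Rightarrow> bool" where
  "sd_le \<nu> \<nu>' \<longleftrightarrow> (\<forall>f. increasing f \<and> (\<forall>X. 0 \<le> f X) \<longrightarrow>
      (\<Sum>X\<in>UNIV. \<nu> X * f X) \<le> (\<Sum>X\<in>UNIV. \<nu>' X * f X))"

end

theory Submission
  imports Defs
begin

(* Both kernels move only site i, so it suffices to compare them on each fibre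
   {X(i := s) | s in {0, 1, star}}. With a and b the mu-weights of the contracted
   configuration carrying 0 resp. 1 at i, pi restricted to the fibre is proportional to
   (a, theta b, (1 - theta) b): pi-GD resamples from this law, while s-GD resamples from
   (a, theta b) on {0, 1} and keeps star. Against an increasing f the difference of the two
   fibre averages is, up to a positive normaliser,
     (f(star) - m) * (nu(star) (a + theta b) - (nu(0) + nu(1)) (1 - theta) b),
   m being the s-GD mean; the first factor is nonnegative because f is increasing, the second
   because nu/pi is. *)

lemma heat_bath_le_frozen_top:
  fixes p0 p1 p2 n0 n1 n2 f0 f1 f2 :: real
  assumes p: "0 \<le> p0" "0 \<le> p1" "0 \<le> p2" "0 < p0 + p1"
    and f: "f0 \<le> f2" "f1 \<le> f2"
    and n: "n0 * p2 \<le> n2 * p0" "n1 * p2 \<le> n2 * p1"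
  shows "(n0 + n1 + n2) * ((p0 * f0 + p1 * f1 + p2 * f2) / (p0 + p1 + p2))
    \<le> (n0 + n1) * ((p0 * f0 + p1 * f1) / (p0 + p1)) + n2 * f2"
proof -
  define q where "q = p0 + p1"
  define m where "m = (p0 * f0 + p1 * f1) / q"
  have q: "0 < q" using p by (simp add: q_def)
  have lower: "p0 * f0 + p1 * f1 = q * m"
    using q by (simp add: m_def)
  have "p0 * f0 + p1 * f1 \<le> q * f2"
    using p f by (simp add: q_def distrib_right add_mono mult_left_mono)
  then have "q * m \<le> q * f2" by (simp only: lower)
  then have m_le: "m \<le> f2" using q by simp
  have mass_le: "(n0 + n1) * p2 \<le> n2 * q"
    using n by (simp add: q_def algebra_simps)
  have "(n0 + n1) * m + n2 * f2 - (n0 + n1 + n2) * ((q * m + p2 * f2) / (q + p2))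
      = (f2 - m) * (n2 * q - (n0 + n1) * p2) / (q + p2)"
    using q p by (simp add: field_simps)
  also have "\<dots> \<ge> 0"
    using m_le mass_le q p by simp
  finally show ?thesis
    using q by (simp add: lower q_def[symmetric])
qed

lemma sum_UNIV_fiberwise:
  fixes g :: "('v::finite \<Rightarrow> 'a::finite) \<Rightarrow> 'b::comm_monoid_add"
  shows "(\<Sum>X\<in>UNIV. g X) = (\<Sum>\<eta>\<in>{\<eta>. \<eta> i = c}. \<Sum>s\<in>UNIV. g (\<eta>(i := s)))"
proof -
  have "(\<Sum>X\<in>UNIV. g X) = (\<Sum>(\<eta>, s)\<in>{\<eta>. \<eta> i = c} \<times> UNIV. g (\<eta>(i := s)))"
    by (rule sum.reindex_bij_witness[where j = "\<lambda>X. (X(i := c), X i)" and i = "\<lambda>(\<eta>, s). \<eta>(i := s)"])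
      auto
  then show ?thesis by (simp add: sum.cartesian_product)
qed

lemma sum_agree_off_site:
  fixes h :: "('v::finite \<Rightarrow> 'a::finite) \<Rightarrow> 'b::comm_monoid_add"
  shows "(\<Sum>Y\<in>UNIV. if \<forall>j. j \<noteq> i \<longrightarrow> Y j = X j then h Y else 0) = (\<Sum>s\<in>UNIV. h (X(i := s)))"
proof -
  have "(\<Sum>s\<in>UNIV. h (X(i := s))) = (\<Sum>Y\<in>{Y. \<forall>j. j \<noteq> i \<longrightarrow> Y j = X j}. h Y)"
    by (rule sum.reindex_bij_witness[where i = "\<lambda>Y. Y i" and j = "\<lambda>s. X(i := s)"]) auto
  then show ?thesis
    by (simp add: sum.If_cases)
qed

lemma sum_kapply_mult:
  "(\<Sum>Y\<in>UNIV. kapply \<nu> P Y * f Y) = (\<Sum>X\<in>UNIV. \<nu> X * (\<Sum>Y\<in>UNIV. P X Y * f Y))"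
  unfolding kapply_def sum_distrib_left sum_distrib_right
  by (subst sum.swap) (simp add: ac_simps)

lemma cond_marg_factor:
  assumes "\<And>t. p (X(i := t)) = c * w t" and "c \<noteq> 0"
  shows "cond_marg p i X t = w t / (\<Sum>u\<in>UNIV. w u)"
  using assms by (simp add: cond_marg_def sum_distrib_left[symmetric])

lemma expectation_P_piGD:
  "(\<Sum>Y\<in>UNIV. P_piGD \<mu> \<theta> i X Y * f Y) = (\<Sum>t\<in>UNIV. cond_marg (piL \<mu> \<theta>) i X t * f (X(i := t)))"
  unfolding P_piGD_def if_distrib[where f = "\<lambda>c. c * _"] mult_zero_left
  by (subst sum_agree_off_site) simp

lemma expectation_P_sGD_Star:
  assumes "X i = Star"
  shows "(\<Sum>Y\<in>UNIV. P_sGD \<mu> \<theta> i X Y * f Y) = f X"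
proof -
  have "(\<Sum>Y\<in>UNIV. P_sGD \<mu> \<theta> i X Y * f Y) = (\<Sum>Y\<in>UNIV. if Y = X then f Y else 0)"
    using assms by (intro sum.cong) (auto simp: P_sGD_def)
  then show ?thesis by simp
qed

lemma expectation_P_sGD:
  assumes "X i \<noteq> Star"
  shows "(\<Sum>Y\<in>UNIV. P_sGD \<mu> \<theta> i X Y * f Y)
    = (\<Sum>\<beta>\<in>UNIV. cond_marg (tilt \<theta> \<mu>) i (contr X) \<beta> * f (X(i := if \<beta> then One else Zero)))"
proof -
  have "(\<Sum>Y\<in>UNIV. P_sGD \<mu> \<theta> i X Y * f Y)
      = (\<Sum>Y\<in>UNIV. if \<forall>j. j \<noteq> i \<longrightarrow> Y j = X j then
           (if Y i \<noteq> Star then cond_marg (tilt \<theta> \<mu>) i (contr X) (Y i = One) * f Y else 0) else 0)"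
    using assms by (intro sum.cong) (auto simp: P_sGD_def)
  also have "\<dots> = (\<Sum>t\<in>UNIV.
      if t \<noteq> Star then cond_marg (tilt \<theta> \<mu>) i (contr X) (t = One) * f (X(i := t)) else 0)"
    by (subst sum_agree_off_site) (simp only: fun_upd_same)
  finally show ?thesis by (simp add: UNIV_spin UNIV_bool add.commute)
qed

definition lift_weight :: "real \<Rightarrow> spin \<Rightarrow> real" where
  "lift_weight \<theta> s = lift1 \<theta> (s \<noteq> Zero) s"

lemma lift_weight_simps [simp]:
  "lift_weight \<theta> Zero = 1" "lift_weight \<theta> One = \<theta>" "lift_weight \<theta> Star = 1 - \<theta>"
  by (simp_all add: lift_weight_def)

lemma lift_prob_eq_0:
  assumes "\<sigma> \<noteq> contr X"
  shows "lift_prob \<theta> \<sigma> X = 0"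
proof -
  obtain j where "\<sigma> j \<noteq> (X j \<noteq> Zero)"
    using assms unfolding contr_def by auto
  then have "lift1 \<theta> (\<sigma> j) (X j) = 0"
    by (cases "X j"; cases "\<sigma> j") auto
  then show ?thesis
    unfolding lift_prob_def by (intro prod_zero) auto
qed

lemma contr_fun_upd: "contr (X(i := t)) = (contr X)(i := t \<noteq> Zero)"
  by (auto simp: contr_def)

lemma piL_eq_prod: "piL \<mu> \<theta> X = \<mu> (contr X) * (\<Prod>j\<in>UNIV. lift_weight \<theta> (X j))"
proof -
  have "piL \<mu> \<theta> X = \<mu> (contr X) * lift_prob \<theta> (contr X) X"
    unfolding piL_def by (subst sum.remove[of _ "contr X"]) (auto simp: lift_prob_eq_0)
  then show ?thesis
    by (simp add: lift_prob_def lift_weight_def contr_def)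
qed

lemma piL_fun_upd:
  "piL \<mu> \<theta> (X(i := t))
    = (\<Prod>j\<in>-{i}. lift_weight \<theta> (X j)) * (\<mu> ((contr X)(i := t \<noteq> Zero)) * lift_weight \<theta> t)"
proof -
  have "(\<Prod>j\<in>UNIV. lift_weight \<theta> ((X(i := t)) j)) = lift_weight \<theta> t * (\<Prod>j\<in>-{i}. lift_weight \<theta> (X j))"
    by (simp add: prod.remove[of UNIV i] Compl_eq_Diff_UNIV)
  then show ?thesis
    by (simp add: piL_eq_prod contr_fun_upd)
qed

lemma piL_nonneg:
  assumes "\<forall>\<sigma>. 0 \<le> \<mu> \<sigma>" and "0 \<le> \<theta>" and "\<theta> \<le> 1"
  shows "0 \<le> piL \<mu> \<theta> X"
proof -
  have "0 \<le> lift_weight \<theta> s" for s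
    using assms by (cases s) auto
  then show ?thesis
    using assms by (simp add: piL_eq_prod prod_nonneg)
qed

lemma cond_marg_piL:
  assumes "0 < \<theta>" and "\<theta> < 1"
  shows "cond_marg (piL \<mu> \<theta>) i X t = \<mu> ((contr X)(i := t \<noteq> Zero)) * lift_weight \<theta> t
    / (\<mu> ((contr X)(i := False)) + \<mu> ((contr X)(i := True)))"
proof -
  have "lift_weight \<theta> s \<noteq> 0" for s
    using assms by (cases s) auto
  then have "(\<Prod>j\<in>-{i}. lift_weight \<theta> (X j)) \<noteq> 0"
    by simp
  then show ?thesis
    by (subst cond_marg_factor[where w = "\<lambda>t. \<mu> ((contr X)(i := t \<noteq> Zero)) * lift_weight \<theta> t",
          OF piL_fun_upd])
      (simp_all add: UNIV_spin algebra_simps)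
qed

lemma card_fun_upd_bool:
  fixes \<sigma> :: "'v::finite \<Rightarrow> bool"
  shows "card {j. (\<sigma>(i := \<beta>)) j} = card ({j. \<sigma> j} - {i}) + (if \<beta> then 1 else 0)"
proof (cases \<beta>)
  case True
  then have "{j. (\<sigma>(i := \<beta>)) j} = insert i ({j. \<sigma> j} - {i})"
    by auto
  moreover have "card (insert i ({j. \<sigma> j} - {i})) = card ({j. \<sigma> j} - {i}) + 1"
    by (subst card_insert_disjoint) auto
  ultimately show ?thesis
    using True by (simp del: insert_Diff_single)
next
  case False
  then have "{j. (\<sigma>(i := \<beta>)) j} = {j. \<sigma> j} - {i}"
    by auto
  then show ?thesis
    using False by simp
qed

lemma tilt_fun_upd:
  "tilt \<theta> \<mu> (\<sigma>(i := \<beta>))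
    = \<theta> ^ card ({j. \<sigma> j} - {i}) / (\<Sum>\<tau>\<in>UNIV. \<mu> \<tau> * \<theta> ^ card {j. \<tau> j})
      * (\<mu> (\<sigma>(i := \<beta>)) * (if \<beta> then \<theta> else 1))"
  unfolding tilt_def card_fun_upd_bool by (simp add: power_add)

lemma tilt_normalizer_pos:
  assumes "is_distr \<mu>" and "0 < \<theta>"
  shows "0 < (\<Sum>\<tau>\<in>UNIV. \<mu> \<tau> * \<theta> ^ card {j. \<tau> j})"
proof -
  have nonneg: "\<forall>\<tau>. 0 \<le> \<mu> \<tau>" and "sum \<mu> UNIV = 1"
    using assms(1) by (auto simp: is_distr_def)
  then obtain \<tau> where "\<mu> \<tau> \<noteq> 0"
    by (metis sum.neutral zero_neq_one)
  then have "0 < \<mu> \<tau> * \<theta> ^ card {j. \<tau> j}"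
    using nonneg assms(2) by (simp add: order_le_neq_trans)
  then show ?thesis
    using nonneg assms(2) by (intro sum_pos2[where i = \<tau>]) auto
qed

lemma cond_marg_tilt:
  assumes "is_distr \<mu>" and "0 < \<theta>"
  shows "cond_marg (tilt \<theta> \<mu>) i \<sigma> \<beta>
    = \<mu> (\<sigma>(i := \<beta>)) * (if \<beta> then \<theta> else 1) / (\<mu> (\<sigma>(i := False)) + \<theta> * \<mu> (\<sigma>(i := True)))"
proof -
  have "\<theta> ^ card ({j. \<sigma> j} - {i}) / (\<Sum>\<tau>\<in>UNIV. \<mu> \<tau> * \<theta> ^ card {j. \<tau> j}) \<noteq> 0"
    using tilt_normalizer_pos[OF assms] assms(2) by simp
  then show ?thesis
    by (subst cond_marg_factor[where w = "\<lambda>\<beta>. \<mu> (\<sigma>(i := \<beta>)) * (if \<beta> then \<theta> else 1)",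
          OF tilt_fun_upd])
      (simp_all add: UNIV_bool algebra_simps)
qed

lemma expectation_P_piGD_closed:
  fixes \<mu> :: "('v::finite \<Rightarrow> bool) \<Rightarrow> real" and X :: "'v \<Rightarrow> spin" and i :: 'v
  assumes "0 < \<theta>" and "\<theta> < 1"
  defines "a \<equiv> \<mu> ((contr X)(i := False))" and "b \<equiv> \<mu> ((contr X)(i := True))"
  shows "(\<Sum>Y\<in>UNIV. P_piGD \<mu> \<theta> i X Y * f Y)
    = (a * f (X(i := Zero)) + \<theta> * b * f (X(i := One)) + (1 - \<theta>) * b * f (X(i := Star))) / (a + b)"
  unfolding expectation_P_piGD cond_marg_piL[OF assms(1,2)]
  by (simp add: UNIV_spin a_def b_def add_divide_distrib ac_simps)

lemma expectation_P_sGD_closed: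
  fixes \<mu> :: "('v::finite \<Rightarrow> bool) \<Rightarrow> real" and X :: "'v \<Rightarrow> spin" and i :: 'v
  assumes "is_distr \<mu>" and "0 < \<theta>" and "X i \<noteq> Star"
  defines "a \<equiv> \<mu> ((contr X)(i := False))" and "b \<equiv> \<mu> ((contr X)(i := True))"
  shows "(\<Sum>Y\<in>UNIV. P_sGD \<mu> \<theta> i X Y * f Y)
    = (a * f (X(i := Zero)) + \<theta> * b * f (X(i := One))) / (a + \<theta> * b)"
  using assms(3)
  by (simp add: expectation_P_sGD cond_marg_tilt[OF assms(1,2)] UNIV_bool a_def b_def add_divide_distrib)

lemma cfg_le_fun_upd: "spin_rank s \<le> spin_rank t \<Longrightarrow> cfg_le (X(i := s)) (X(i := t))"
  by (simp add: cfg_le_def)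

lemma ratio_increasing_cross_mult:
  assumes "\<forall>X. 0 \<le> p X" and "\<forall>X. X \<notin> Omega p \<longrightarrow> \<nu> X = 0"
    and "\<forall>X\<in>Omega p. \<forall>Y\<in>Omega p. cfg_le X Y \<longrightarrow> \<nu> X / p X \<le> \<nu> Y / p Y"
    and "cfg_le X Y"
  shows "\<nu> X * p Y \<le> \<nu> Y * p X"
proof (cases "X \<in> Omega p \<and> Y \<in> Omega p")
  case True
  then have "0 < p X" "0 < p Y"
    by (auto simp: Omega_def)
  moreover have "\<nu> X / p X \<le> \<nu> Y / p Y"
    using True assms(3,4) by blast
  ultimately show ?thesis
    by (simp add: field_simps)
next
  case False
  then have "p X = 0 \<and> \<nu> X = 0 \<or> p Y = 0 \<and> \<nu> Y = 0"
    using assms(1,2) by (auto simp: Omega_def order.strict_iff_order)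
  then show ?thesis
    by auto
qed

lemma ratio_increasing_fiber:
  fixes \<mu> :: "('v::finite \<Rightarrow> bool) \<Rightarrow> real" and X :: "'v \<Rightarrow> spin" and i :: 'v
  assumes \<mu>: "is_distr \<mu>" and \<theta>: "0 < \<theta>" "\<theta> < 1"
    and supp: "\<forall>X. X \<notin> Omega (piL \<mu> \<theta>) \<longrightarrow> \<nu> X = 0"
    and ratio: "\<forall>X\<in>Omega (piL \<mu> \<theta>). \<forall>Y\<in>Omega (piL \<mu> \<theta>).
      cfg_le X Y \<longrightarrow> \<nu> X / piL \<mu> \<theta> X \<le> \<nu> Y / piL \<mu> \<theta> Y"
  defines "a \<equiv> \<mu> ((contr X)(i := False))" and "b \<equiv> \<mu> ((contr X)(i := True))"
  shows "\<nu> (X(i := Zero)) * ((1 - \<theta>) * b) \<le> \<nu> (X(i := Star)) * a"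
    and "\<nu> (X(i := One)) * ((1 - \<theta>) * b) \<le> \<nu> (X(i := Star)) * (\<theta> * b)"
proof -
  define C where "C = (\<Prod>j\<in>-{i}. lift_weight \<theta> (X j))"
  have "0 < lift_weight \<theta> s" for s
    using \<theta> by (cases s) auto
  then have C: "0 < C"
    by (simp add: C_def prod_pos)
  have cross: "\<nu> (X(i := s)) * piL \<mu> \<theta> (X(i := Star)) \<le> \<nu> (X(i := Star)) * piL \<mu> \<theta> (X(i := s))"
    if "s \<noteq> Star" for s
  proof (rule ratio_increasing_cross_mult[OF _ supp ratio])
    show "\<forall>X. 0 \<le> piL \<mu> \<theta> X"
      using \<mu> \<theta> by (auto simp: is_distr_def intro: piL_nonneg)
    show "cfg_le (X(i := s)) (X(i := Star))"
      using that by (intro cfg_le_fun_upd) (cases s; simp)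
  qed
  have "C * (\<nu> (X(i := Zero)) * ((1 - \<theta>) * b)) \<le> C * (\<nu> (X(i := Star)) * a)"
    using cross[of Zero] by (simp add: piL_fun_upd a_def b_def C_def mult_ac)
  then show "\<nu> (X(i := Zero)) * ((1 - \<theta>) * b) \<le> \<nu> (X(i := Star)) * a"
    using C by simp
  have "C * (\<nu> (X(i := One)) * ((1 - \<theta>) * b)) \<le> C * (\<nu> (X(i := Star)) * (\<theta> * b))"
    using cross[of One] by (simp add: piL_fun_upd a_def b_def C_def mult_ac)
  then show "\<nu> (X(i := One)) * ((1 - \<theta>) * b) \<le> \<nu> (X(i := Star)) * (\<theta> * b)"
    using C by simp
qed

lemma null_fiber_nu_eq_0:
  assumes "\<forall>X. X \<notin> Omega (piL \<mu> \<theta>) \<longrightarrow> \<nu> X = 0"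
    and "\<mu> ((contr X)(i := False)) = 0" and "\<mu> ((contr X)(i := True)) = 0"
  shows "\<nu> (X(i := s)) = 0"
proof -
  have "piL \<mu> \<theta> (X(i := s)) = 0"
    using assms(2,3) by (cases s) (simp_all add: piL_fun_upd)
  then show ?thesis
    using assms(1) by (simp add: Omega_def)
qed

lemma fiber_expectation_le:
  fixes f :: "('v::finite \<Rightarrow> spin) \<Rightarrow> real"
  assumes \<mu>: "is_distr \<mu>" and \<theta>: "0 < \<theta>" "\<theta> < 1"
    and supp: "\<forall>X. X \<notin> Omega (piL \<mu> \<theta>) \<longrightarrow> \<nu> X = 0"
    and ratio: "\<forall>X\<in>Omega (piL \<mu> \<theta>). \<forall>Y\<in>Omega (piL \<mu> \<theta>).
      cfg_le X Y \<longrightarrow> \<nu> X / piL \<mu> \<theta> X \<le> \<nu> Y / piL \<mu> \<theta> Y"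
    and f: "increasing f"
  shows "(\<Sum>s\<in>UNIV. \<nu> (\<eta>(i := s)) * (\<Sum>Y\<in>UNIV. P_piGD \<mu> \<theta> i (\<eta>(i := s)) Y * f Y))
    \<le> (\<Sum>s\<in>UNIV. \<nu> (\<eta>(i := s)) * (\<Sum>Y\<in>UNIV. P_sGD \<mu> \<theta> i (\<eta>(i := s)) Y * f Y))"
proof -
  define a where "a = \<mu> ((contr \<eta>)(i := False))"
  define b where "b = \<mu> ((contr \<eta>)(i := True))"
  define n where "n s = \<nu> (\<eta>(i := s))" for s
  define g where "g s = f (\<eta>(i := s))" for s
  have ab: "0 \<le> a" "0 \<le> b"
    using \<mu> by (auto simp: is_distr_def a_def b_def)
  have piGD: "(\<Sum>Y\<in>UNIV. P_piGD \<mu> \<theta> i (\<eta>(i := s)) Y * f Y)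
      = (a * g Zero + \<theta> * b * g One + (1 - \<theta>) * b * g Star) / (a + b)" for s
    using expectation_P_piGD_closed[OF \<theta>, of \<mu> i "\<eta>(i := s)" f]
    by (simp add: contr_fun_upd a_def b_def g_def)
  have sGD: "(\<Sum>Y\<in>UNIV. P_sGD \<mu> \<theta> i (\<eta>(i := s)) Y * f Y) = (a * g Zero + \<theta> * b * g One) / (a + \<theta> * b)"
    if "s \<noteq> Star" for s
    using that expectation_P_sGD_closed[OF \<mu> \<theta>(1), of "\<eta>(i := s)" i f]
    by (simp add: contr_fun_upd a_def b_def g_def)
  have sGD_Star: "(\<Sum>Y\<in>UNIV. P_sGD \<mu> \<theta> i (\<eta>(i := Star)) Y * f Y) = g Star"
    by (simp add: expectation_P_sGD_Star g_def)
  have g_mono: "g Zero \<le> g Star" "g One \<le> g Star"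
    using f by (simp_all add: g_def increasing_def cfg_le_fun_upd)
  have n_le: "n Zero * ((1 - \<theta>) * b) \<le> n Star * a" "n One * ((1 - \<theta>) * b) \<le> n Star * (\<theta> * b)"
    using ratio_increasing_fiber[OF \<mu> \<theta> supp ratio] by (simp_all add: n_def a_def b_def)
  show ?thesis
  proof (cases "a + b = 0")
    case True
    then have "a = 0" "b = 0"
      using ab by auto
    then have "\<nu> (\<eta>(i := s)) = 0" for s
      by (intro null_fiber_nu_eq_0[OF supp]) (simp_all only: a_def b_def)
    then show ?thesis
      by simp
  next
    case False
    then have "0 < a + \<theta> * b"
      using ab \<theta> by (cases "a = 0") (simp_all add: add_pos_nonneg)
    have "(\<Sum>s\<in>UNIV. \<nu> (\<eta>(i := s)) * (\<Sum>Y\<in>UNIV. P_piGD \<mu> \<theta> i (\<eta>(i := s)) Y * f Y))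
        = (n Zero + n One + n Star) * ((a * g Zero + \<theta> * b * g One + (1 - \<theta>) * b * g Star)
          / (a + \<theta> * b + (1 - \<theta>) * b))"
      unfolding piGD sum_distrib_right[symmetric] by (simp add: UNIV_spin n_def algebra_simps)
    also have "\<dots> \<le> (n Zero + n One) * ((a * g Zero + \<theta> * b * g One) / (a + \<theta> * b)) + n Star * g Star"
      using ab \<theta> g_mono n_le \<open>0 < a + \<theta> * b\<close> by (intro heat_bath_le_frozen_top) auto
    also have "\<dots> = (\<Sum>s\<in>UNIV. \<nu> (\<eta>(i := s)) * (\<Sum>Y\<in>UNIV. P_sGD \<mu> \<theta> i (\<eta>(i := s)) Y * f Y))"
      by (simp add: sGD sGD_Star UNIV_spin n_def distrib_right add_divide_distrib)
    finally show ?thesis .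
  qed
qed

theorem lemma7p1:
  fixes \<mu> :: "('v::finite \<Rightarrow> bool) \<Rightarrow> real" and \<theta> :: real
    and i :: 'v and \<nu> :: "('v \<Rightarrow> spin) \<Rightarrow> real"
  assumes "is_distr \<mu>"
    and "0 < \<theta>" and "\<theta> < 1"
    and "is_distr \<nu>"
    and "\<forall>X. X \<notin> Omega (piL \<mu> \<theta>) \<longrightarrow> \<nu> X = 0"
    and "\<forall>X\<in>Omega (piL \<mu> \<theta>). \<forall>Y\<in>Omega (piL \<mu> \<theta>).
           cfg_le X Y \<longrightarrow> \<nu> X / piL \<mu> \<theta> X \<le> \<nu> Y / piL \<mu> \<theta> Y"
  shows "sd_le (kapply \<nu> (P_piGD \<mu> \<theta> i)) (kapply \<nu> (P_sGD \<mu> \<theta> i))"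
  unfolding sd_le_def
proof (intro allI impI, elim conjE)
  fix f :: "('v \<Rightarrow> spin) \<Rightarrow> real"
  assume "increasing f"
  have "(\<Sum>X\<in>UNIV. \<nu> X * (\<Sum>Y\<in>UNIV. P_piGD \<mu> \<theta> i X Y * f Y))
      = (\<Sum>\<eta>\<in>{\<eta>. \<eta> i = Zero}. \<Sum>s\<in>UNIV. \<nu> (\<eta>(i := s)) * (\<Sum>Y\<in>UNIV. P_piGD \<mu> \<theta> i (\<eta>(i := s)) Y * f Y))"
    by (rule sum_UNIV_fiberwise)
  also have "\<dots> \<le> (\<Sum>\<eta>\<in>{\<eta>. \<eta> i = Zero}. \<Sum>s\<in>UNIV. \<nu> (\<eta>(i := s)) * (\<Sum>Y\<in>UNIV. P_sGD \<mu> \<theta> i (\<eta>(i := s)) Y * f Y))"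
    using assms(1-3,5,6) \<open>increasing f\<close> by (intro sum_mono fiber_expectation_le)
  also have "\<dots> = (\<Sum>X\<in>UNIV. \<nu> X * (\<Sum>Y\<in>UNIV. P_sGD \<mu> \<theta> i X Y * f Y))"
    by (rule sum_UNIV_fiberwise[symmetric])
  finally show "(\<Sum>X\<in>UNIV. kapply \<nu> (P_piGD \<mu> \<theta> i) X * f X) \<le> (\<Sum>X\<in>UNIV. kapply \<nu> (P_sGD \<mu> \<theta> i) X * f X)"
    unfolding sum_kapply_mult .
qed

end
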